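(* There is no algebra automorphism $\theta$ of $U^+$ with $\theta((z))=(z')$, and none with $\theta((z'))=(z)$.
   Context: $\Bbbk$ is an algebraically closed field of characteristic zero and $q\in\Bbbk^\times$ is not a root of unity. $U^+$ is the $\Bbbk$-algebra generated by $e_1,e_2$ with relations (S1) $e_1^2e_2-(q^2+q^{-2})e_1e_2e_1+e_2e_1^2=0$ and (S2) $e_2^3e_1-(q^2+1+q^{-2})e_2^2e_1e_2+(q^2+1+q^{-2})e_2e_1e_2^2-e_1e_2^3=0$. Set $e_3=e_1e_2-q^2e_2e_1$, $z=e_2e_3-q^2e_3e_2$, $w=e_2e_3-e_3e_2$, $z'=e_1w-q^{-4}we_1$; $(z)$, $(z')$ are the two-sided ideals they generate (both central elements). *)

theory Defs
  imports "HOL-Algebra.QuotRing" "HOL-Computational_Algebra.Polynomial"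
begin

text \<open>Noncommutative polynomials over 'k in two letters: finitely supported
  functions from words (lists over bool; False = e1, True = e2) to 'k.
  Multiplication is concatenation-convolution.\<close>

type_synonym 'k ncpoly = "bool list \<Rightarrow> 'k"

definition ncp_carrier :: "'k::zero ncpoly set" where
  "ncp_carrier = {f. finite {w. f w \<noteq> 0}}"

definition ncp_add :: "'k::plus ncpoly \<Rightarrow> 'k ncpoly \<Rightarrow> 'k ncpoly" where
  "ncp_add f g = (\<lambda>w. f w + g w)"

definition ncp_sub :: "'k::minus ncpoly \<Rightarrow> 'k ncpoly \<Rightarrow> 'k ncpoly" where
  "ncp_sub f g = (\<lambda>w. f w - g w)"

definition ncp_smult :: "'k::times \<Rightarrow> 'k ncpoly \<Rightarrow> 'k ncpoly" where
  "ncp_smult c f = (\<lambda>w. c * f w)"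

definition ncp_mult :: "'k::comm_semiring_1 ncpoly \<Rightarrow> 'k ncpoly \<Rightarrow> 'k ncpoly" where
  "ncp_mult f g = (\<lambda>w. \<Sum>i\<le>length w. f (take i w) * g (drop i w))"

definition ncp_mon :: "bool list \<Rightarrow> 'k::{zero,one} ncpoly" where
  "ncp_mon u = (\<lambda>w. if w = u then 1 else 0)"

definition ncp_const :: "'k::zero \<Rightarrow> 'k ncpoly" where
  "ncp_const c = (\<lambda>w. if w = [] then c else 0)"

definition free_alg :: "'k::field ncpoly ring" where
  "free_alg = \<lparr>carrier = ncp_carrier, monoid.mult = ncp_mult, one = ncp_mon [],
                ring.zero = (\<lambda>_. 0), ring.add = ncp_add\<rparr>"

definition gen1 :: "'k::field ncpoly" where "gen1 = ncp_mon [False]"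
definition gen2 :: "'k::field ncpoly" where "gen2 = ncp_mon [True]"

definition rel_S1 :: "'k::field \<Rightarrow> 'k ncpoly" where
  "rel_S1 q = ncp_add
     (ncp_sub (ncp_mult (ncp_mult gen1 gen1) gen2)
              (ncp_smult (q^2 + inverse q ^ 2) (ncp_mult (ncp_mult gen1 gen2) gen1)))
     (ncp_mult (ncp_mult gen2 gen1) gen1)"

definition rel_S2 :: "'k::field \<Rightarrow> 'k ncpoly" where
  "rel_S2 q = ncp_sub
     (ncp_add
       (ncp_sub (ncp_mult (ncp_mult (ncp_mult gen2 gen2) gen2) gen1)
                (ncp_smult (q^2 + 1 + inverse q ^ 2)
                   (ncp_mult (ncp_mult (ncp_mult gen2 gen2) gen1) gen2)))
       (ncp_smult (q^2 + 1 + inverse q ^ 2)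
          (ncp_mult (ncp_mult (ncp_mult gen2 gen1) gen2) gen2)))
     (ncp_mult (ncp_mult (ncp_mult gen1 gen2) gen2) gen2)"

definition el_e3 :: "'k::field \<Rightarrow> 'k ncpoly" where
  "el_e3 q = ncp_sub (ncp_mult gen1 gen2) (ncp_smult (q^2) (ncp_mult gen2 gen1))"

definition el_z :: "'k::field \<Rightarrow> 'k ncpoly" where
  "el_z q = ncp_sub (ncp_mult gen2 (el_e3 q)) (ncp_smult (q^2) (ncp_mult (el_e3 q) gen2))"

definition el_w :: "'k::field \<Rightarrow> 'k ncpoly" where
  "el_w q = ncp_sub (ncp_mult gen2 (el_e3 q)) (ncp_mult (el_e3 q) gen2)"

definition el_z' :: "'k::field \<Rightarrow> 'k ncpoly" where
  "el_z' q = ncp_sub (ncp_mult gen1 (el_w q)) (ncp_smult (inverse q ^ 4) (ncp_mult (el_w q) gen1))"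

definition serre_ideal :: "'k::field \<Rightarrow> 'k ncpoly set" where
  "serre_ideal q = genideal free_alg {rel_S1 q, rel_S2 q}"

definition Uplus :: "'k::field \<Rightarrow> 'k ncpoly set ring" where
  "Uplus q = free_alg Quot serre_ideal q"

definition cls :: "'k::field \<Rightarrow> 'k ncpoly \<Rightarrow> 'k ncpoly set" where
  "cls q f = serre_ideal q +>\<^bsub>free_alg\<^esub> f"

definition alg_aut :: "'k::field \<Rightarrow> ('k ncpoly set \<Rightarrow> 'k ncpoly set) \<Rightarrow> bool" where
  "alg_aut q \<theta> \<longleftrightarrow> \<theta> \<in> ring_iso (Uplus q) (Uplus q) \<and>
     (\<forall>c. \<theta> (cls q (ncp_const c)) = cls q (ncp_const c))"

definition alg_closed_field :: "'k::field itself \<Rightarrow> bool" where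
  "alg_closed_field _ \<longleftrightarrow> (\<forall>p :: 'k poly. degree p > 0 \<longrightarrow> (\<exists>x. poly p x = 0))"

end

theory Submission
  imports Defs
begin

text \<open>Sending \<open>e\<^sub>1\<close> to \<open>\<epsilon>\<close> and \<open>e\<^sub>2\<close> to \<open>1\<close> respects the Serre relations, so it defines a
  homomorphism \<open>\<psi>\<close> from \<open>U\<^sup>+\<close> to the dual numbers \<open>k[\<epsilon>]/(\<epsilon>\<^sup>2)\<close>, and \<open>\<psi> z = (1 - q\<^sup>2)\<^sup>2\<epsilon> \<noteq> 0\<close>.
  On the other hand \<open>w\<close> is a commutator, so \<open>z' = e\<^sub>1w - q\<^sup>-\<^sup>4we\<^sub>1\<close> is killed by every
  homomorphism into a commutative ring. If a ring endomorphism \<open>\<theta>\<close> maps \<open>(z')\<close> onto \<open>(z)\<close>, then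
  \<open>z = \<theta> y\<close> with \<open>y \<in> (z')\<close>, and \<open>\<psi> \<circ> \<theta>\<close> kills \<open>z'\<close>, hence \<open>y\<close>, hence \<open>\<psi> z = 0\<close>. If an automorphism
  maps \<open>(z)\<close> onto \<open>(z')\<close>, its inverse maps \<open>(z')\<close> onto \<open>(z)\<close>.\<close>

lemma ring_hom_vanishes_on_genideal:
  assumes "ring R" "ring S" "h \<in> ring_hom R S"
    and "B \<subseteq> carrier R" "\<And>b. b \<in> B \<Longrightarrow> h b = \<zero>\<^bsub>S\<^esub>"
    and "x \<in> genideal R B"
  shows "h x = \<zero>\<^bsub>S\<^esub>"
proof -
  interpret ring_hom_ring R S h using assms(1-3) by (rule ring_hom_ringI2)
  have "B \<subseteq> a_kernel R S h"
    using assms(4,5) unfolding a_kernel_def' by blast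
  then have "genideal R B \<subseteq> a_kernel R S h"
    by (rule R.genideal_minimal[OF kernel_is_ideal])
  then show ?thesis using assms(6) unfolding a_kernel_def' by blast
qed

lemma (in ring_hom_ring) image_rcos_eq_singleton:
  assumes "ideal I R" "I \<subseteq> a_kernel R S h" "x \<in> carrier R"
  shows "h ` (I +> x) = {h x}"
proof -
  interpret I: ideal I R by fact
  have shift: "h (i \<oplus> x) = h x" if "i \<in> I" for i
  proof -
    have "i \<in> carrier R" "h i = \<zero>\<^bsub>S\<^esub>" using that assms(2) unfolding a_kernel_def' by blast+
    then show ?thesis using assms(3) by simp
  qed
  have "h ` (I +> x) = (\<lambda>i. h (i \<oplus> x)) ` I"
    unfolding a_r_coset_def' by blast
  also have "\<dots> = (\<lambda>i. h x) ` I"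
    using shift by (rule image_cong[OF refl])
  also have "\<dots> = {h x}"
    using I.zero_closed by blast
  finally show ?thesis .
qed

lemma (in ring_hom_ring) FactRing_induced_hom:
  assumes "ideal I R" "I \<subseteq> a_kernel R S h"
  shows "(\<lambda>X. the_elem (h ` X)) \<in> ring_hom (R Quot I) S"
proof -
  interpret I: ideal I R by fact
  have induced: "the_elem (h ` (I +> x)) = h x" if "x \<in> carrier R" for x
    using image_rcos_eq_singleton[OF assms that] by simp
  have cosets: "a_rcosets I = (\<lambda>x. I +> x) ` carrier R"
    by (auto simp: A_RCOSETS_def')
  show ?thesis
    by (rule ring_hom_memI) (auto simp: cosets induced FactRing_def I.rcoset_mult_add I.a_rcos_sum)
qed

lemma ring_hom_image_genideal_neq:
  assumes "ring R" "ring S" "\<theta> \<in> ring_hom R R"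
    and "a \<in> carrier R" "\<psi> \<in> ring_hom R S" "\<psi> a \<noteq> \<zero>\<^bsub>S\<^esub>"
    and "b \<in> carrier R" "\<And>\<chi>. \<chi> \<in> ring_hom R S \<Longrightarrow> \<chi> b = \<zero>\<^bsub>S\<^esub>"
  shows "\<theta> ` genideal R {b} \<noteq> genideal R {a}"
proof
  assume image: "\<theta> ` genideal R {b} = genideal R {a}"
  have "a \<in> genideal R {a}" using assms(1,4) by (rule ring.genideal_self')
  with image obtain y where y: "y \<in> genideal R {b}" "a = \<theta> y" by blast
  have hom: "\<psi> \<circ> \<theta> \<in> ring_hom R S" using assms(3,5) by (rule ring_hom_trans)
  have "(\<psi> \<circ> \<theta>) b = \<zero>\<^bsub>S\<^esub>" using hom by (rule assms(8))
  then have "(\<psi> \<circ> \<theta>) y = \<zero>\<^bsub>S\<^esub>"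
    using assms(7) by (intro ring_hom_vanishes_on_genideal[OF assms(1,2) hom _ _ y(1)]) simp_all
  with y(2) assms(6) show False by simp
qed

lemma ring_iso_image_genideal_neq:
  assumes "ring R" "ring S" "\<theta> \<in> ring_iso R R"
    and "a \<in> carrier R" "\<psi> \<in> ring_hom R S" "\<psi> a \<noteq> \<zero>\<^bsub>S\<^esub>"
    and "b \<in> carrier R" "\<And>\<chi>. \<chi> \<in> ring_hom R S \<Longrightarrow> \<chi> b = \<zero>\<^bsub>S\<^esub>"
  shows "\<theta> ` genideal R {a} \<noteq> genideal R {b}" "\<theta> ` genideal R {b} \<noteq> genideal R {a}"
proof -
  let ?\<theta>' = "inv_into (carrier R) \<theta>"
  have hom: "\<theta> \<in> ring_hom R R" "?\<theta>' \<in> ring_hom R R"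
    using assms(3) ring_iso_set_sym[OF assms(1,3)] by (simp_all add: ring_iso_def)
  show "\<theta> ` genideal R {b} \<noteq> genideal R {a}"
    using assms(1,2) hom(1) assms(4-8) by (rule ring_hom_image_genideal_neq)
  have inj: "inj_on \<theta> (carrier R)" using assms(3) by (simp add: ring_iso_def bij_betw_def)
  have "genideal R {a} \<subseteq> carrier R"
    using assms(1,4) by (simp add: ring.genideal_ideal ideal.axioms(1) additive_subgroup.a_subset)
  then have "?\<theta>' ` \<theta> ` genideal R {a} = genideal R {a}"
    using inj by (simp add: inv_into_image_cancel)
  moreover have "?\<theta>' ` genideal R {b} \<noteq> genideal R {a}"
    using assms(1,2) hom(2) assms(4-8) by (rule ring_hom_image_genideal_neq)
  ultimately show "\<theta> ` genideal R {a} \<noteq> genideal R {b}" by metis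
qed

section \<open>The free algebra is a ring\<close>

lemma ncp_mult_Nil: "ncp_mult f g [] = f [] * g []"
  by (simp add: ncp_mult_def)

lemma ncp_mult_Cons: "ncp_mult f g (x # w) = f [] * g (x # w) + ncp_mult (\<lambda>u. f (x # u)) g w"
  unfolding ncp_mult_def length_Cons sum.atMost_Suc_shift by simp

lemma ncp_mult_linear_left:
  "ncp_mult (\<lambda>u. c * f u + g u) h w = c * ncp_mult f h w + ncp_mult g h w"
  by (simp add: ncp_mult_def sum.distrib sum_distrib_left algebra_simps)

lemma ncp_mult_assoc: "ncp_mult (ncp_mult f g) h = ncp_mult f (ncp_mult g h)"
proof
  show "ncp_mult (ncp_mult f g) h w = ncp_mult f (ncp_mult g h) w" for w
  proof (induction w arbitrary: f)
    case Nil
    then show ?case by (simp add: ncp_mult_Nil mult_ac)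
  next
    case (Cons x w)
    then show ?case
      by (simp add: ncp_mult_Cons ncp_mult_Nil ncp_mult_linear_left algebra_simps)
  qed
qed

lemma ncp_mult_one_left: "ncp_mult (ncp_mon []) f = f"
proof
  show "ncp_mult (ncp_mon []) f w = f w" for w
    by (cases w) (simp_all add: ncp_mult_Cons ncp_mult_Nil ncp_mon_def, simp add: ncp_mult_def)
qed

lemma ncp_mult_one_right: "ncp_mult f (ncp_mon []) = f"
proof
  show "ncp_mult f (ncp_mon []) w = f w" for w
    by (induction w arbitrary: f) (simp_all add: ncp_mult_Cons ncp_mult_Nil ncp_mon_def)
qed

lemma ncp_mult_add_left: "ncp_mult (ncp_add f g) h = ncp_add (ncp_mult f h) (ncp_mult g h)"
  by (rule ext) (simp add: ncp_mult_def ncp_add_def sum.distrib algebra_simps)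

lemma ncp_mult_add_right: "ncp_mult h (ncp_add f g) = ncp_add (ncp_mult h f) (ncp_mult h g)"
  by (rule ext) (simp add: ncp_mult_def ncp_add_def sum.distrib algebra_simps)

lemma ncp_smult_conv_mult: "ncp_smult c f = ncp_mult (ncp_const c) f"
proof
  show "ncp_smult c f w = ncp_mult (ncp_const c) f w" for w
    by (cases w) (simp_all add: ncp_smult_def ncp_mult_Cons ncp_mult_Nil ncp_const_def,
        simp add: ncp_mult_def)
qed

lemma support_ncp_mult:
  "{w. ncp_mult f g w \<noteq> 0} \<subseteq> (\<lambda>(u, v). u @ v) ` ({w. f w \<noteq> 0} \<times> {w. g w \<noteq> 0})"
proof
  fix w assume "w \<in> {w. ncp_mult f g w \<noteq> 0}"
  then obtain i where "f (take i w) * g (drop i w) \<noteq> 0"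
    unfolding ncp_mult_def by (auto elim: sum.not_neutral_contains_not_neutral)
  then show "w \<in> (\<lambda>(u, v). u @ v) ` ({w. f w \<noteq> 0} \<times> {w. g w \<noteq> 0})"
    by (intro image_eqI[where x = "(take i w, drop i w)"]) auto
qed

lemma ncp_mult_closed: "f \<in> ncp_carrier \<Longrightarrow> g \<in> ncp_carrier \<Longrightarrow> ncp_mult f g \<in> ncp_carrier"
  unfolding ncp_carrier_def mem_Collect_eq by (rule finite_subset[OF support_ncp_mult]) simp

lemma ncp_add_closed:
  "f \<in> ncp_carrier \<Longrightarrow> g \<in> ncp_carrier \<Longrightarrow> ncp_add f (g :: 'k::monoid_add ncpoly) \<in> ncp_carrier"
  unfolding ncp_carrier_def ncp_add_def mem_Collect_eq
  by (rule finite_subset[of _ "{w. f w \<noteq> 0} \<union> {w. g w \<noteq> 0}"]) auto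

lemma ncp_sub_closed:
  "f \<in> ncp_carrier \<Longrightarrow> g \<in> ncp_carrier \<Longrightarrow> ncp_sub f (g :: 'k::ab_group_add ncpoly) \<in> ncp_carrier"
  unfolding ncp_carrier_def ncp_sub_def mem_Collect_eq
  by (rule finite_subset[of _ "{w. f w \<noteq> 0} \<union> {w. g w \<noteq> 0}"]) auto

lemma ncp_smult_closed: "f \<in> ncp_carrier \<Longrightarrow> ncp_smult c (f :: 'k::mult_zero ncpoly) \<in> ncp_carrier"
  unfolding ncp_carrier_def ncp_smult_def mem_Collect_eq
  by (rule finite_subset[of _ "{w. f w \<noteq> 0}"]) auto

lemma ncp_mon_closed: "ncp_mon u \<in> ncp_carrier"
  unfolding ncp_carrier_def ncp_mon_def mem_Collect_eq
  by (rule finite_subset[of _ "{u}"]) auto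

lemma ncp_const_closed: "ncp_const c \<in> ncp_carrier"
  unfolding ncp_carrier_def ncp_const_def mem_Collect_eq
  by (rule finite_subset[of _ "{[]}"]) auto

lemma free_alg_simps [simp]:
  "carrier free_alg = ncp_carrier" "monoid.mult free_alg = ncp_mult" "one free_alg = ncp_mon []"
  "zero free_alg = (\<lambda>_. 0)" "ring.add free_alg = ncp_add"
  by (simp_all add: free_alg_def)

lemma ring_free_alg: "ring (free_alg :: 'k::field ncpoly ring)"
proof (rule ringI)
  show "abelian_group (free_alg :: 'k ncpoly ring)"
  proof (rule abelian_groupI, goal_cases)
    case 1
    then show ?case by (simp add: ncp_add_closed)
  next
    case (6 f)
    then show ?case
      by (intro bexI[of _ "\<lambda>w. - f w"]) (simp_all add: ncp_add_def ncp_carrier_def)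
  qed (simp_all add: ncp_add_closed ncp_add_def ncp_carrier_def add_ac)
  show "monoid (free_alg :: 'k ncpoly ring)"
    by (rule monoidI) (simp_all add: ncp_mult_closed ncp_mon_closed ncp_mult_assoc
        ncp_mult_one_left ncp_mult_one_right)
qed (simp_all add: ncp_mult_add_left ncp_mult_add_right)

lemma ncp_sub_conv_a_minus:
  assumes "f \<in> ncp_carrier" "g \<in> ncp_carrier"
  shows "ncp_sub f g = f \<ominus>\<^bsub>free_alg\<^esub> (g :: 'k::field ncpoly)"
proof -
  interpret ring "free_alg :: 'k ncpoly ring" by (rule ring_free_alg)
  have "\<ominus>\<^bsub>free_alg\<^esub> g = (\<lambda>w. - g w)"
    using assms(2) by (intro minus_equality) (simp_all add: ncp_add_def ncp_carrier_def)
  then show ?thesis by (simp add: a_minus_def ncp_sub_def ncp_add_def)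
qed

definition ncp_lin :: "(bool list \<Rightarrow> 'k) \<Rightarrow> 'k ncpoly \<Rightarrow> 'k::comm_semiring_1" where
  "ncp_lin \<gamma> f = (\<Sum>w | f w \<noteq> 0. f w * \<gamma> w)"

lemma ncp_lin_eq_sum:
  "finite A \<Longrightarrow> {w. f w \<noteq> 0} \<subseteq> A \<Longrightarrow> ncp_lin \<gamma> f = (\<Sum>w\<in>A. f w * \<gamma> w)"
  unfolding ncp_lin_def by (rule sum.mono_neutral_left) (auto intro: finite_subset)

lemma ncp_lin_add:
  assumes "f \<in> ncp_carrier" "g \<in> ncp_carrier"
  shows "ncp_lin \<gamma> (ncp_add f g) = ncp_lin \<gamma> f + ncp_lin \<gamma> g"
proof -
  let ?A = "{w. f w \<noteq> 0} \<union> {w. g w \<noteq> 0}"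
  have fin: "finite ?A" using assms by (simp add: ncp_carrier_def)
  have "ncp_lin \<gamma> (ncp_add f g) = (\<Sum>w\<in>?A. ncp_add f g w * \<gamma> w)"
    by (rule ncp_lin_eq_sum[OF fin]) (auto simp: ncp_add_def)
  also have "\<dots> = (\<Sum>w\<in>?A. f w * \<gamma> w) + (\<Sum>w\<in>?A. g w * \<gamma> w)"
    by (simp add: ncp_add_def distrib_right sum.distrib)
  also have "\<dots> = ncp_lin \<gamma> f + ncp_lin \<gamma> g"
    by (simp add: ncp_lin_eq_sum[OF fin] subset_iff)
  finally show ?thesis .
qed

lemma ncp_lin_sub:
  assumes "f \<in> ncp_carrier" "g \<in> ncp_carrier"
  shows "ncp_lin \<gamma> (ncp_sub f g) = ncp_lin \<gamma> f - ncp_lin \<gamma> (g :: 'k::comm_ring_1 ncpoly)"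
proof -
  let ?A = "{w. f w \<noteq> 0} \<union> {w. g w \<noteq> 0}"
  have fin: "finite ?A" using assms by (simp add: ncp_carrier_def)
  have "ncp_lin \<gamma> (ncp_sub f g) = (\<Sum>w\<in>?A. ncp_sub f g w * \<gamma> w)"
    by (rule ncp_lin_eq_sum[OF fin]) (auto simp: ncp_sub_def)
  also have "\<dots> = (\<Sum>w\<in>?A. f w * \<gamma> w) - (\<Sum>w\<in>?A. g w * \<gamma> w)"
    by (simp add: ncp_sub_def left_diff_distrib sum_subtractf)
  also have "\<dots> = ncp_lin \<gamma> f - ncp_lin \<gamma> g"
    by (simp add: ncp_lin_eq_sum[OF fin] subset_iff)
  finally show ?thesis .
qed

lemma ncp_lin_smult:
  assumes "f \<in> ncp_carrier"
  shows "ncp_lin \<gamma> (ncp_smult c f) = c * ncp_lin \<gamma> f"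
proof -
  have "finite {w. f w \<noteq> 0}" using assms by (simp add: ncp_carrier_def)
  then show ?thesis
    by (subst (1 2) ncp_lin_eq_sum) (auto simp: ncp_smult_def sum_distrib_left algebra_simps)
qed

lemma ncp_lin_mon: "ncp_lin \<gamma> (ncp_mon u) = \<gamma> u"
  by (subst ncp_lin_eq_sum[of "{u}"]) (auto simp: ncp_mon_def)

lemma ncp_lin_mult:
  assumes "f \<in> ncp_carrier" "g \<in> ncp_carrier"
  shows "ncp_lin \<gamma> (ncp_mult f g) =
    (\<Sum>u | f u \<noteq> 0. \<Sum>v | g v \<noteq> 0. f u * g v * (\<gamma> (u @ v) :: 'k::comm_semiring_1))"
proof -
  let ?F = "{u. f u \<noteq> 0}" and ?G = "{v. g v \<noteq> 0}"
  let ?A = "(\<lambda>(u, v). u @ v) ` (?F \<times> ?G)"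
  let ?S = "Sigma ?A (\<lambda>w. {..length w})"
  have fin: "finite ?F" "finite ?G" using assms by (simp_all add: ncp_carrier_def)
  have "ncp_lin \<gamma> (ncp_mult f g) = (\<Sum>w\<in>?A. ncp_mult f g w * \<gamma> w)"
    using fin support_ncp_mult[of f g] by (intro ncp_lin_eq_sum) auto
  also have "\<dots> = (\<Sum>w\<in>?A. \<Sum>i\<le>length w. f (take i w) * g (drop i w) * \<gamma> w)"
    by (simp add: ncp_mult_def sum_distrib_right)
  also have "\<dots> = (\<Sum>(w, i)\<in>?S. f (take i w) * g (drop i w) * \<gamma> w)"
    using fin by (intro sum.Sigma) auto
  also have "\<dots> = (\<Sum>(u, v)\<in>?F \<times> ?G. f u * g v * \<gamma> (u @ v))"
  proof (rule sum.reindex_bij_witness_not_neutral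
      [where j = "\<lambda>(w, i). (take i w, drop i w)" and i = "\<lambda>(u, v). (u @ v, length u)"
        and S' = "{(w, i)\<in>?S. f (take i w) = 0 \<or> g (drop i w) = 0}" and T' = "{}"], goal_cases)
    case 1
    have "finite ?S" using fin by (intro finite_SigmaI) auto
    then show ?case by (rule finite_subset[rotated]) blast
  qed (auto simp: min_def split: prod.splits)
  finally show ?thesis by (simp add: sum.cartesian_product)
qed

section \<open>Evaluation in the dual numbers\<close>

text \<open>The pair \<open>(a, b)\<close> stands for \<open>a + b\<epsilon>\<close> with \<open>\<epsilon>\<^sup>2 = 0\<close>.\<close>

definition dual_numbers :: "('k::comm_ring_1 \<times> 'k) ring" where
  "dual_numbers =
    \<lparr>carrier = UNIV, monoid.mult = (\<lambda>x y. (fst x * fst y, fst x * snd y + snd x * fst y)),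
     one = (1, 0), ring.zero = (0, 0), ring.add = (\<lambda>x y. (fst x + fst y, snd x + snd y))\<rparr>"

lemma dual_numbers_simps [simp]:
  "carrier dual_numbers = UNIV"
  "x \<otimes>\<^bsub>dual_numbers\<^esub> y = (fst x * fst y, fst x * snd y + snd x * fst y)"
  "\<one>\<^bsub>dual_numbers\<^esub> = (1, 0)"
  "\<zero>\<^bsub>dual_numbers\<^esub> = (0, 0)"
  "x \<oplus>\<^bsub>dual_numbers\<^esub> y = (fst x + fst y, snd x + snd y)"
  by (simp_all add: dual_numbers_def)

lemma cring_dual_numbers: "cring (dual_numbers :: ('k::comm_ring_1 \<times> 'k) ring)"
proof (rule cringI)
  show "abelian_group (dual_numbers :: ('k \<times> 'k) ring)"
  proof (rule abelian_groupI, goal_cases)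
    case (6 x)
    then show ?case by (intro bexI[of _ "(- fst x, - snd x)"]) simp_all
  qed (simp_all add: algebra_simps)
  show "comm_monoid (dual_numbers :: ('k \<times> 'k) ring)"
    by (rule comm_monoidI) (simp_all add: algebra_simps)
qed (simp add: algebra_simps)

lemma ring_dual_numbers: "ring (dual_numbers :: ('k::comm_ring_1 \<times> 'k) ring)"
  using cring_dual_numbers by (rule cring.axioms(1))

text \<open>The linear extension of \<open>e\<^sub>1 \<mapsto> \<epsilon>\<close>, \<open>e\<^sub>2 \<mapsto> 1\<close>: a word containing \<open>n\<close>
  letters \<open>e\<^sub>1\<close> evaluates to \<open>\<epsilon>\<^sup>n\<close>.\<close>

definition dual_eval :: "'k::comm_ring_1 ncpoly \<Rightarrow> 'k \<times> 'k" where
  "dual_eval f = (ncp_lin (\<lambda>w. of_bool (count_list w False = 0)) f,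
                  ncp_lin (\<lambda>w. of_bool (count_list w False = 1)) f)"

lemma of_bool_add_eq_1:
  fixes m n :: nat
  shows "of_bool (m + n = 1) =
    of_bool (m = 0) * of_bool (n = 1) + of_bool (m = 1) * (of_bool (n = 0) :: 'a::semiring_1)"
  by (cases "m = 0"; cases "m = 1") auto

lemma dual_eval_mult:
  fixes f g :: "'k::comm_ring_1 ncpoly"
  assumes "f \<in> ncp_carrier" "g \<in> ncp_carrier"
  shows "dual_eval (ncp_mult f g) = dual_eval f \<otimes>\<^bsub>dual_numbers\<^esub> dual_eval g"
proof -
  let ?\<alpha> = "\<lambda>w. of_bool (count_list w False = 0) :: 'k"
  let ?\<beta> = "\<lambda>w. of_bool (count_list w False = 1) :: 'k"
  have "ncp_lin ?\<alpha> (ncp_mult f g) = ncp_lin ?\<alpha> f * ncp_lin ?\<alpha> g"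
    unfolding ncp_lin_mult[OF assms] by (simp add: ncp_lin_def of_bool_conj sum_product mult_ac)
  moreover have
    "ncp_lin ?\<beta> (ncp_mult f g) = ncp_lin ?\<alpha> f * ncp_lin ?\<beta> g + ncp_lin ?\<beta> f * ncp_lin ?\<alpha> g"
    unfolding ncp_lin_mult[OF assms] count_list_append of_bool_add_eq_1
    by (simp add: ncp_lin_def sum_product sum.distrib algebra_simps)
      (subst sum.swap, simp add: mult_ac)
  ultimately show ?thesis by (simp add: dual_eval_def)
qed

lemma dual_eval_add:
  "f \<in> ncp_carrier \<Longrightarrow> g \<in> ncp_carrier \<Longrightarrow>
    dual_eval (ncp_add f g) = dual_eval f \<oplus>\<^bsub>dual_numbers\<^esub> dual_eval g"
  by (simp add: dual_eval_def ncp_lin_add)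

lemma dual_eval_sub:
  "f \<in> ncp_carrier \<Longrightarrow> g \<in> ncp_carrier \<Longrightarrow>
    dual_eval (ncp_sub f g) =
      (fst (dual_eval f) - fst (dual_eval g), snd (dual_eval f) - snd (dual_eval g))"
  by (simp add: dual_eval_def ncp_lin_sub)

lemma dual_eval_smult:
  "f \<in> ncp_carrier \<Longrightarrow> dual_eval (ncp_smult c f) = (c * fst (dual_eval f), c * snd (dual_eval f))"
  by (simp add: dual_eval_def ncp_lin_smult)

lemma dual_eval_mon:
  "dual_eval (ncp_mon u) = (of_bool (count_list u False = 0), of_bool (count_list u False = 1))"
  by (simp add: dual_eval_def ncp_lin_mon)

lemma dual_eval_ring_hom: "dual_eval \<in> ring_hom free_alg dual_numbers"
  by (rule ring_hom_memI) (simp_all add: dual_eval_mult dual_eval_add dual_eval_mon)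

lemma ncp_carrier_elements [simp]:
  "gen1 \<in> ncp_carrier" "gen2 \<in> ncp_carrier" "ncp_const c \<in> ncp_carrier"
  "el_e3 q \<in> ncp_carrier" "el_w q \<in> ncp_carrier" "el_z q \<in> ncp_carrier" "el_z' q \<in> ncp_carrier"
  "rel_S1 q \<in> ncp_carrier" "rel_S2 q \<in> ncp_carrier"
  by (simp_all add: gen1_def gen2_def el_e3_def el_w_def el_z_def el_z'_def rel_S1_def rel_S2_def
      ncp_mon_closed ncp_const_closed ncp_mult_closed ncp_add_closed ncp_sub_closed
      ncp_smult_closed)

lemmas dual_eval_simps =
  dual_eval_add dual_eval_sub dual_eval_smult dual_eval_mult
  ncp_mult_closed ncp_add_closed ncp_sub_closed ncp_smult_closed

lemma dual_eval_gen [simp]: "dual_eval gen1 = (0, 1)" "dual_eval gen2 = (1, 0)"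
  by (simp_all add: gen1_def gen2_def dual_eval_mon)

lemma dual_eval_rel_S1: "dual_eval (rel_S1 q) = (0, 0)"
  by (simp add: rel_S1_def dual_eval_simps)

lemma dual_eval_rel_S2: "dual_eval (rel_S2 q) = (0, 0)"
  by (simp add: rel_S2_def dual_eval_simps)

lemma dual_eval_el_z: "dual_eval (el_z q) = (0, (1 - q\<^sup>2)\<^sup>2)"
  by (simp add: el_z_def el_e3_def dual_eval_simps power2_eq_square algebra_simps)

text \<open>\<open>w\<close> is a commutator, and both terms of \<open>z'\<close> contain \<open>w\<close> as a factor.\<close>

lemma cring_hom_el_z'_eq_zero:
  fixes q :: "'k::field"
  assumes h: "h \<in> ring_hom (free_alg :: 'k ncpoly ring) D" and D: "cring D"
  shows "h (el_z' q) = \<zero>\<^bsub>D\<^esub>"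
proof -
  interpret D: cring D by (rule D)
  interpret ring_hom_ring "free_alg :: 'k ncpoly ring" D h
    by (rule ring_hom_ringI2[OF ring_free_alg D.ring_axioms h])
  have carrier: "gen1 \<in> carrier free_alg" "gen2 \<in> carrier free_alg" "el_e3 q \<in> carrier free_alg"
    "el_w q \<in> carrier free_alg" "ncp_const c \<in> carrier free_alg" for c
    by simp_all
  have "el_w q = (gen2 \<otimes>\<^bsub>free_alg\<^esub> el_e3 q) \<ominus>\<^bsub>free_alg\<^esub> (el_e3 q \<otimes>\<^bsub>free_alg\<^esub> gen2)"
    by (simp add: el_w_def ncp_sub_conv_a_minus ncp_mult_closed)
  then have hw: "h (el_w q) = \<zero>\<^bsub>D\<^esub>"
    by (simp del: free_alg_simps
        add: carrier D.m_comm[of "h gen2"] D.r_neg a_minus_def hom_add hom_a_inv)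
  have "el_z' q = (gen1 \<otimes>\<^bsub>free_alg\<^esub> el_w q) \<ominus>\<^bsub>free_alg\<^esub>
      (ncp_const (inverse q ^ 4) \<otimes>\<^bsub>free_alg\<^esub> (el_w q \<otimes>\<^bsub>free_alg\<^esub> gen1))"
    by (simp add: el_z'_def ncp_sub_conv_a_minus ncp_smult_conv_mult ncp_mult_closed)
  then show ?thesis
    by (simp del: free_alg_simps add: carrier hw a_minus_def hom_add hom_a_inv)
qed

lemma ideal_serre_ideal: "ideal (serre_ideal q) (free_alg :: 'k::field ncpoly ring)"
  unfolding serre_ideal_def by (rule ring.genideal_ideal[OF ring_free_alg]) simp

lemma ring_Uplus: "ring (Uplus q)"
  unfolding Uplus_def by (rule ideal.quotient_is_ring[OF ideal_serre_ideal])

lemma cls_ring_hom: "cls q \<in> ring_hom free_alg (Uplus q)"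
proof -
  have "cls q = (+>\<^bsub>free_alg\<^esub>) (serre_ideal q)" by (rule ext) (simp add: cls_def)
  then show ?thesis unfolding Uplus_def by (simp add: ideal.rcos_ring_hom[OF ideal_serre_ideal])
qed

lemma cring_hom_Uplus_el_z'_eq_zero:
  assumes "\<psi> \<in> ring_hom (Uplus q) D" "cring D"
  shows "\<psi> (cls q (el_z' q)) = \<zero>\<^bsub>D\<^esub>"
  using cring_hom_el_z'_eq_zero[OF ring_hom_trans[OF cls_ring_hom assms(1)] assms(2)] by simp

lemma serre_ideal_subset_kernel_dual_eval:
  "serre_ideal q \<subseteq> a_kernel free_alg dual_numbers (dual_eval :: 'k::field ncpoly \<Rightarrow> _)"
proof -
  interpret ring_hom_ring free_alg dual_numbers "dual_eval :: 'k ncpoly \<Rightarrow> _"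
    by (rule ring_hom_ringI2[OF ring_free_alg ring_dual_numbers dual_eval_ring_hom])
  have "{rel_S1 q, rel_S2 q} \<subseteq> a_kernel free_alg dual_numbers dual_eval"
    unfolding a_kernel_def' by (simp add: dual_eval_rel_S1 dual_eval_rel_S2)
  then show ?thesis
    unfolding serre_ideal_def by (rule R.genideal_minimal[OF kernel_is_ideal])
qed

lemma Uplus_dual_hom_el_z:
  fixes q :: "'k::field"
  shows "\<exists>\<psi>\<in>ring_hom (Uplus q) dual_numbers. \<psi> (cls q (el_z q)) = (0, (1 - q\<^sup>2)\<^sup>2)"
proof -
  interpret ring_hom_ring free_alg dual_numbers "dual_eval :: 'k ncpoly \<Rightarrow> _"
    by (rule ring_hom_ringI2[OF ring_free_alg ring_dual_numbers dual_eval_ring_hom])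
  let ?\<psi> = "\<lambda>X. the_elem (dual_eval ` X)"
  show ?thesis
  proof (rule bexI[of _ ?\<psi>])
    show "?\<psi> \<in> ring_hom (Uplus q) dual_numbers"
      unfolding Uplus_def
      by (rule FactRing_induced_hom[OF ideal_serre_ideal serre_ideal_subset_kernel_dual_eval])
    show "?\<psi> (cls q (el_z q)) = (0, (1 - q\<^sup>2)\<^sup>2)"
      using image_rcos_eq_singleton[OF ideal_serre_ideal serre_ideal_subset_kernel_dual_eval]
      by (simp add: cls_def dual_eval_el_z)
  qed
qed

theorem proposition3p3:
  fixes q :: "'k::field_char_0"
  assumes "alg_closed_field TYPE('k)"
    and "q \<noteq> 0"
    and "\<forall>n::nat. n > 0 \<longrightarrow> q ^ n \<noteq> 1"
  shows "\<not> (\<exists>\<theta>. alg_aut q \<theta> \<and>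
              \<theta> ` genideal (Uplus q) {cls q (el_z q)} = genideal (Uplus q) {cls q (el_z' q)})
       \<and> \<not> (\<exists>\<theta>. alg_aut q \<theta> \<and>
              \<theta> ` genideal (Uplus q) {cls q (el_z' q)} = genideal (Uplus q) {cls q (el_z q)})"
proof -
  obtain \<psi> where \<psi>: "\<psi> \<in> ring_hom (Uplus q) dual_numbers" "\<psi> (cls q (el_z q)) = (0, (1 - q\<^sup>2)\<^sup>2)"
    using Uplus_dual_hom_el_z by blast
  have "q\<^sup>2 \<noteq> 1" using assms(3) by auto
  then have z_not_killed: "\<psi> (cls q (el_z q)) \<noteq> \<zero>\<^bsub>dual_numbers\<^esub>" using \<psi>(2) by simp
  have in_carrier: "cls q (el_z q) \<in> carrier (Uplus q)" "cls q (el_z' q) \<in> carrier (Uplus q)"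
    by (simp_all add: ring_hom_closed[OF cls_ring_hom])
  have z'_killed: "\<chi> (cls q (el_z' q)) = \<zero>\<^bsub>dual_numbers\<^esub>"
    if "\<chi> \<in> ring_hom (Uplus q) dual_numbers" for \<chi>
    using that cring_dual_numbers by (rule cring_hom_Uplus_el_z'_eq_zero)
  have "\<theta> ` genideal (Uplus q) {cls q (el_z q)} \<noteq> genideal (Uplus q) {cls q (el_z' q)} \<and>
    \<theta> ` genideal (Uplus q) {cls q (el_z' q)} \<noteq> genideal (Uplus q) {cls q (el_z q)}"
    if "alg_aut q \<theta>" for \<theta>
  proof -
    have "\<theta> \<in> ring_iso (Uplus q) (Uplus q)" using that by (simp add: alg_aut_def)
    then show ?thesis
      by (intro conjI ring_iso_image_genideal_neq[OF ring_Uplus ring_dual_numbers _ in_carrier(1)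
            \<psi>(1) z_not_killed in_carrier(2)] z'_killed)
  qed
  then show ?thesis by blast
qed

end
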